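(* For every decision $\delta=(\delta_0,\delta_1)$ with $0<\delta_1<\delta_0<1$ there exists a decision $\delta'=(\delta'_0,\delta'_1)$ with $0<\delta'_0<\delta'_1<1$ such that $R_{\delta'}(\theta)<R_\delta(\theta)$ for every $\theta\in[0,1]$.
   Context: Bernoulli model: for $\theta\in[0,1]$, $p_\theta(x)=\theta^x(1-\theta)^{1-x}$, $x\in\{0,1\}$. A nonrandomized decision is a pair $\delta=(\delta_0,\delta_1)\in[0,1]^2$, used as the predictive distribution $p_\delta(y\mid x)=\delta_x^{\,y}(1-\delta_x)^{1-y}$ for a future $y\in\{0,1\}$ after observing $x$. The Kullback–Leibler risk is $R_\delta(\theta)=-S(\theta)+\theta^2\log\frac1{\delta_1}+\theta(1-\theta)\log\frac1{1-\delta_1}+\theta(1-\theta)\log\frac1{\delta_0}+(1-\theta)^2\log\frac1{1-\delta_0}$, where $S(\theta)=-\theta\log\theta-(1-\theta)\log(1-\theta)$ (with $0\log 0=0$) is the binary entropy. *)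

theory Defs
  imports Complex_Main
begin

definition xlogx :: "real \<Rightarrow> real" where
  "xlogx x = (if x = 0 then 0 else x * ln x)"

definition bin_entropy :: "real \<Rightarrow> real" where
  "bin_entropy \<theta> = - xlogx \<theta> - xlogx (1 - \<theta>)"

definition KL_risk :: "real \<times> real \<Rightarrow> real \<Rightarrow> real" where
  "KL_risk d \<theta> = (case d of (d0, d1) \<Rightarrow>
      - bin_entropy \<theta>
      + \<theta>^2 * ln (1 / d1)
      + \<theta> * (1 - \<theta>) * ln (1 / (1 - d1))
      + \<theta> * (1 - \<theta>) * ln (1 / d0)
      + (1 - \<theta>)^2 * ln (1 / (1 - d0)))"

end

theory Submission
  imports Defs
begin

(* For interior decisions d = (d0,d1) and e = (e0,e1) the risk difference
   R_d(t) - R_e(t) is a quadratic form  P t^2 + R t(1-t) + Q (1-t)^2  in (t, 1-t) whose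
   coefficients are differences of logarithms (KL_risk_diff).  When P, Q > 0 such a form is
   positive on [0,1] iff  R + 2 sqrt(P Q) > 0  (qform_pos_iff), an open condition.
   Given d1 < d0, the symmetric decision (c,c) with c = d0/(1+d0-d1) lies strictly between
   d1 and d0, and bounding each log-difference from below by  ln a - ln b >= 1 - b/a  turns
   its risk gain into the nonnegative square  (d0-d1)/(d0(1-d1)) ((1-d1)t - d0(1-t))^2,
   with strictness at the single zero t = c coming from a strict log bound
   (symmetric_decision_dominates).  Finally, the criterion is continuous in e1, so moving e1
   slightly above c keeps strict dominance and yields a decision with e0 < e1. *)

definition qform :: "real \<Rightarrow> real \<Rightarrow> real \<Rightarrow> real \<Rightarrow> real" where
  "qform P R Q t = P * t^2 + R * (t * (1 - t)) + Q * (1 - t)^2"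

lemma qform_pos_iff:
  fixes P R Q :: real
  assumes P: "0 < P" and Q: "0 < Q"
  shows "(\<forall>t\<in>{0..1}. 0 < qform P R Q t) \<longleftrightarrow> 0 < R + 2 * sqrt (P * Q)"
proof -
  define a where "a = sqrt P"
  define b where "b = sqrt Q"
  have a: "0 < a" "a^2 = P" using P by (auto simp: a_def)
  have b: "0 < b" "b^2 = Q" using Q by (auto simp: b_def)
  have sqrt_PQ: "sqrt (P * Q) = a * b" by (simp add: a_def b_def real_sqrt_mult)
  have square_form: "qform P R Q t = (a*t - b*(1-t))^2 + (R + 2*(a*b)) * (t*(1-t))" for t
    unfolding qform_def a(2)[symmetric] b(2)[symmetric] by (simp add: power2_eq_square algebra_simps)
  show ?thesis
  proof
    assume pos: "\<forall>t\<in>{0..1}. 0 < qform P R Q t"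
    text \<open>Evaluate at the zero of the square term.\<close>
    define t where "t = b / (a + b)"
    have "t \<in> {0..1}" using a b by (auto simp: t_def field_simps)
    then have "0 < qform P R Q t" using pos by blast
    moreover have "a*t - b*(1-t) = 0" using a b by (simp add: t_def field_simps)
    ultimately have "0 < (R + 2*(a*b)) * (t*(1-t))" using square_form[of t] by simp
    moreover have "0 < t" "t < 1" using a b by (simp_all add: t_def field_simps)
    then have "0 < t*(1-t)" by simp
    ultimately show "0 < R + 2 * sqrt (P * Q)" using sqrt_PQ by (simp add: zero_less_mult_iff)
  next
    assume crit: "0 < R + 2 * sqrt (P * Q)"
    show "\<forall>t\<in>{0..1}. 0 < qform P R Q t"
    proof
      fix t :: real assume "t \<in> {0..1}"
      then consider "t = 0" | "t = 1" | "0 < t*(1-t)" by fastforce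
      then show "0 < qform P R Q t"
      proof cases
        case 3
        then have "0 < (R + 2*(a*b)) * (t*(1-t))" using crit sqrt_PQ by simp
        then show ?thesis unfolding square_form by (simp add: add_nonneg_pos)
      qed (use P Q in \<open>auto simp: qform_def\<close>)
    qed
  qed
qed

lemma qform_mono:
  assumes "P' \<le> P" "R' \<le> R" "Q' \<le> Q" "0 \<le> t" "t \<le> 1"
  shows "qform P' R' Q' t \<le> qform P R Q t"
  unfolding qform_def using assms
  by (intro add_mono mult_right_mono) auto

lemma qform_strict_mono:
  assumes "P' < P" "R' \<le> R" "Q' \<le> Q" "0 < t" "t \<le> 1"
  shows "qform P' R' Q' t < qform P R Q t"
  unfolding qform_def using assms
  by (intro add_less_le_mono add_strict_right_mono mult_strict_right_mono mult_right_mono) auto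

lemma KL_risk_diff:
  assumes "0 < d0" "d0 < 1" "0 < d1" "d1 < 1" "0 < e0" "e0 < 1" "0 < e1" "e1 < 1"
  shows "KL_risk (d0, d1) t - KL_risk (e0, e1) t =
    qform (ln e1 - ln d1) (ln e0 - ln d0 + (ln (1-e1) - ln (1-d1))) (ln (1-e0) - ln (1-d0)) t"
  using assms by (simp add: KL_risk_def qform_def ln_div algebra_simps)

lemma ln_diff_ge:
  fixes a b :: real
  assumes "0 < a" "0 < b"
  shows "1 - b / a \<le> ln a - ln b"
  using ln_le_minus_one[of "b / a"] assms by (simp add: ln_div)

lemma ln_diff_gt:
  fixes a b :: real
  assumes "0 < a" "0 < b" "a \<noteq> b"
  shows "1 - b / a < ln a - ln b"
  using ln_le_minus_one[of "b / a"] ln_eq_minus_one[of "b / a"] assms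
  by (force simp: ln_div field_simps)

lemma symmetric_point:
  fixes d0 d1 :: real
  assumes "0 < d1" "d1 < d0" "d0 < 1"
  defines "c \<equiv> d0 / (1 + (d0 - d1))"
  shows "d1 < c" "c < d0"
proof -
  have "d1 * (d0 - d1) < 1 * (d0 - d1)" using assms by (intro mult_strict_right_mono) auto
  then show "d1 < c" "c < d0" using assms by (auto simp: c_def field_simps)
qed

text \<open>Linearising the log-ratios at (c, c) leaves a perfect square vanishing only at t = c.\<close>
lemma linearised_gain:
  fixes d0 d1 t :: real
  assumes "0 < d1" "d1 < d0" "d0 < 1"
  shows "qform ((d0-d1)*(1-d1)/d0) (- 2*(d0-d1)) (d0*(d0-d1)/(1-d1)) t
       = (d0-d1) / (d0*(1-d1)) * ((1-d1)*t - d0*(1-t))^2"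
  using assms by (simp add: qform_def field_simps power2_eq_square)

lemma symmetric_decision_dominates:
  fixes d0 d1 t :: real
  assumes d: "0 < d1" "d1 < d0" "d0 < 1" and t: "0 \<le> t" "t \<le> 1"
  defines "c \<equiv> d0 / (1 + (d0 - d1))"
  shows "0 < qform (ln c - ln d1) (ln c - ln d0 + (ln (1-c) - ln (1-d1))) (ln (1-c) - ln (1-d0)) t"
proof -
  note c = symmetric_point[OF d, folded c_def]
  text \<open>The linearised coefficients; note d0/c = (1-d1)/(1-c) = 1+d0-d1.\<close>
  have ratios: "1 - d1/c = (d0-d1)*(1-d1)/d0" "1 - d0/c = - (d0-d1)"
      "1 - (1-d1)/(1-c) = - (d0-d1)" "1 - (1-d0)/(1-c) = d0*(d0-d1)/(1-d1)"
    using d by (simp_all add: c_def field_simps)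
  have pos: "0 < c" "0 < 1 - c" "0 < d0" "0 < 1 - d0" "0 < 1 - d1" using c d by auto
  have P: "(d0-d1)*(1-d1)/d0 < ln c - ln d1"
    using ln_diff_gt[OF pos(1) d(1)] ratios(1) c by simp
  have R: "- 2*(d0-d1) \<le> ln c - ln d0 + (ln (1-c) - ln (1-d1))"
    using ln_diff_ge[OF pos(1,3)] ln_diff_ge[OF pos(2,5)] ratios(2,3) by simp
  have Q: "d0*(d0-d1)/(1-d1) \<le> ln (1-c) - ln (1-d0)"
    using ln_diff_ge[OF pos(2,4)] ratios(4) by simp
  have square_nonneg: "0 \<le> qform ((d0-d1)*(1-d1)/d0) (- 2*(d0-d1)) (d0*(d0-d1)/(1-d1)) t"
    unfolding linearised_gain[OF d] using d by simp
  show ?thesis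
  proof (cases "t = c")
    case True
    then have "0 < t" using c d by simp
    then show ?thesis using qform_strict_mono[OF P R Q _ t(2)] square_nonneg by linarith
  next
    case False
    have "(1-d1)*t - d0*(1-t) \<noteq> 0"
      using False d by (auto simp: c_def field_simps)
    then have "0 < qform ((d0-d1)*(1-d1)/d0) (- 2*(d0-d1)) (d0*(d0-d1)/(1-d1)) t"
      unfolding linearised_gain[OF d] using d by simp
    then show ?thesis using qform_mono[OF less_imp_le[OF P] R Q t] by linarith
  qed
qed

lemma positive_right_of:
  fixes f :: "real \<Rightarrow> real"
  assumes "isCont f c" "0 < f c" "c < 1"
  shows "\<exists>x. c < x \<and> x < 1 \<and> 0 < f x"
proof -
  have "(f \<longlongrightarrow> f c) (at_right c)"
    using assms(1) by (simp add: isCont_def filterlim_at_split)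
  then have "eventually (\<lambda>x. 0 < f x) (at_right c)" using assms(2) by (rule order_tendstoD)
  moreover have "eventually (\<lambda>x. c < x \<and> x < 1) (at_right c)"
    using assms(3) by (auto simp: eventually_at_right_field)
  ultimately have "eventually (\<lambda>x. c < x \<and> x < 1 \<and> 0 < f x) (at_right c)"
    by eventually_elim auto
  then show ?thesis using eventually_happens'[of "at_right c"] by auto
qed

theorem mainTheorem3:
  fixes d0 d1 :: real
  assumes "0 < d1" and "d1 < d0" and "d0 < 1"
  shows "\<exists>e0 e1 :: real. 0 < e0 \<and> e0 < e1 \<and> e1 < 1 \<and>
           (\<forall>\<theta>\<in>{0..1}. KL_risk (e0, e1) \<theta> < KL_risk (d0, d1) \<theta>)"
proof -
  define c where "c = d0 / (1 + (d0 - d1))"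
  have c: "d1 < c" "c < d0" using symmetric_point[OF assms] by (simp_all add: c_def)
  define P where "P = (\<lambda>x. ln x - ln d1)"
  define R where "R = (\<lambda>x. ln c - ln d0 + (ln (1-x) - ln (1-d1)))"
  define Q where "Q = ln (1-c) - ln (1-d0)"
  have Q_pos: "0 < Q" and P_pos: "\<And>x. c \<le> x \<Longrightarrow> 0 < P x"
    using c assms by (auto simp: Q_def P_def)
  define crit where "crit = (\<lambda>x. R x + 2 * sqrt (P x * Q))"
  have "0 < crit c"
    using symmetric_decision_dominates[OF assms] qform_pos_iff[OF P_pos Q_pos, of c "R c"]
    by (simp add: crit_def P_def R_def Q_def c_def)
  moreover have "isCont crit c"
    unfolding crit_def P_def R_def using c assms by (intro continuous_intros) auto
  ultimately obtain e1 where e1: "c < e1" "e1 < 1" "0 < crit e1"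
    using positive_right_of c assms by fastforce
  have gain_pos: "0 < qform (P e1) (R e1) Q t" if "t \<in> {0..1}" for t
    using qform_pos_iff[OF P_pos[of e1] Q_pos, of "R e1"] e1 that by (simp add: crit_def)
  have "KL_risk (c, e1) t < KL_risk (d0, d1) t" if "t \<in> {0..1}" for t
  proof -
    have "KL_risk (d0, d1) t - KL_risk (c, e1) t = qform (P e1) (R e1) Q t"
      using KL_risk_diff[of d0 d1 c e1 t] c e1 assms by (simp add: P_def R_def Q_def)
    then show ?thesis using gain_pos[OF that] by linarith
  qed
  then show ?thesis using c e1 assms by (intro exI[of _ c] exI[of _ e1]) auto
qed

end
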